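(* Let $a,b\in\mathbb{R}$ with $0<a<b$, let $p,q>1$ with $\frac1p+\frac1q=1$, $s\in\left(0,\frac1q\right)$, and $\alpha,\lambda\in[0,1]$. Define $$C_s(\alpha,q)=(1-\alpha)\big[A_\alpha^{sq}(a,b)+a^{sq}\big],\qquad D_s(\alpha,q)=\alpha\big[A_\alpha^{sq}(a,b)+b^{sq}\big],$$ $$\varepsilon_1(\alpha,\lambda,p)=(\alpha\lambda)^{p+1}+(1-\alpha-\alpha\lambda)^{p+1},\qquad \varepsilon_2(\alpha,\lambda,p)=(\alpha\lambda)^{p+1}-(\alpha\lambda-1+\alpha)^{p+1}.$$ Then $$\left|\lambda A_\alpha(a^{s+1},b^{s+1})+(1-\lambda)A_\alpha^{s+1}(a,b)-L_{s+1}^{s+1}(a,b)\right|\leq (b-a)\left(\frac{1}{p+1}\right)^{1/p}(s+1)^{1-\frac1q}\cdot K,$$ where $K=\varepsilon_1^{1/p}(\alpha,\lambda,p)C_s^{1/q}(\alpha,q)+\varepsilon_1^{1/p}(1-\alpha,\lambda,p)D_s^{1/q}(\alpha,q)$ if $\alpha\lambda\leq 1-\alpha\leq 1-\lambda(1-\alpha)$; $K=\varepsilon_1^{1/p}(\alpha,\lambda,p)C_s^{1/q}(\alpha,q)+\varepsilon_2^{1/p}(1-\alpha,\lambda,p)D_s^{1/q}(\alpha,q)$ if $\alpha\lambda\leq 1-\lambda(1-\alpha)\leq 1-\alpha$; $K=\varepsilon_2^{1/p}(\alpha,\lambda,p)C_s^{1/q}(\alpha,q)+\varepsilon_1^{1/p}(1-\alpha,\lambda,p)D_s^{1/q}(\alpha,q)$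 if $1-\alpha\leq\alpha\lambda\leq 1-\lambda(1-\alpha)$.
   Context: For real $x,y$ and $\alpha\in[0,1]$, the weighted arithmetic mean is $A_\alpha(x,y)=\alpha x+(1-\alpha)y$, and $A_\alpha^{r}(x,y)$ denotes $(A_\alpha(x,y))^{r}$. For $x,y>0$, $x\neq y$, and $p\in\mathbb{R}\setminus\{-1,0\}$, the $p$-logarithmic mean is $L_p(x,y)=\left(\frac{y^{p+1}-x^{p+1}}{(p+1)(y-x)}\right)^{1/p}$, and $L_{s+1}^{s+1}$ denotes its $(s+1)$-th power. *)

theory Defs
  imports Complex_Main
begin

definition wam :: "real \<Rightarrow> real \<Rightarrow> real \<Rightarrow> real" where
  "wam \<alpha> x y = \<alpha> * x + (1 - \<alpha>) * y"

definition plog_mean :: "real \<Rightarrow> real \<Rightarrow> real \<Rightarrow> real" where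
  "plog_mean p x y = ((y powr (p + 1) - x powr (p + 1)) / ((p + 1) * (y - x))) powr (1 / p)"

definition Cs :: "real \<Rightarrow> real \<Rightarrow> real \<Rightarrow> real \<Rightarrow> real \<Rightarrow> real" where
  "Cs a b s \<alpha> q = (1 - \<alpha>) * (wam \<alpha> a b powr (s * q) + a powr (s * q))"

definition Ds :: "real \<Rightarrow> real \<Rightarrow> real \<Rightarrow> real \<Rightarrow> real \<Rightarrow> real" where
  "Ds a b s \<alpha> q = \<alpha> * (wam \<alpha> a b powr (s * q) + b powr (s * q))"

definition eps1 :: "real \<Rightarrow> real \<Rightarrow> real \<Rightarrow> real" where
  "eps1 \<alpha> lam p = (\<alpha> * lam) powr (p + 1) + (1 - \<alpha> - \<alpha> * lam) powr (p + 1)"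

definition eps2 :: "real \<Rightarrow> real \<Rightarrow> real \<Rightarrow> real" where
  "eps2 \<alpha> lam p = (\<alpha> * lam) powr (p + 1) - (\<alpha> * lam - 1 + \<alpha>) powr (p + 1)"

end

theory Submission
  imports Defs "HOL-Analysis.Analysis"
begin

text \<open>Put \<open>x(t) = a + t(b - a)\<close> and \<open>F(y) = y powr (s + 1)\<close>. Integrating by parts, the left-hand side
  equals \<open>b - a\<close> times the sum of the integrals of \<open>(t - \<alpha>\<lambda>) F'(x(t))\<close> over \<open>[0, 1 - \<alpha>]\<close> and of
  \<open>(t - 1 + \<lambda>(1 - \<alpha>)) F'(x(t))\<close> over \<open>[1 - \<alpha>, 1]\<close>. Hoelder's inequality bounds each integral by the
  \<open>p\<close>-th moment of the kernel \<open>|t - c|\<close>, which is computed exactly and equals \<open>\<epsilon>\<^sub>1\<close> or \<open>\<epsilon>\<^sub>2\<close>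
  divided by \<open>p + 1\<close> according to whether the centre \<open>c\<close> lies inside or outside the interval,
  times the \<open>q\<close>-th moment of \<open>F'(x(t))\<close>. As \<open>s \<le> sq \<le> 1\<close>, the function \<open>y powr (s q)\<close>
  is \<open>s\<close>-convex in the second sense, so the Hermite--Hadamard inequality for such functions bounds
  that moment by the values at the endpoints; this produces \<open>C\<^sub>s\<close> and \<open>D\<^sub>s\<close>.\<close>

lemma integral_abs_diff_powr_right:
  fixes l r c p :: real
  assumes "c \<le> l" "l \<le> r" "p > 0"
  shows "integral {l..r} (\<lambda>t. \<bar>t - c\<bar> powr p) = ((r - c) powr (p + 1) - (l - c) powr (p + 1)) / (p + 1)"
proof -
  have "((\<lambda>t. \<bar>t - c\<bar> powr p) has_integral
      (r - c) powr (p + 1) / (p + 1) - (l - c) powr (p + 1) / (p + 1)) {l..r}"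
  proof (rule fundamental_theorem_of_calculus_interior[OF \<open>l \<le> r\<close>])
    show "continuous_on {l..r} (\<lambda>t. (t - c) powr (p + 1) / (p + 1))"
      using assms by (intro continuous_intros continuous_on_powr') auto
    fix t assume "t \<in> {l<..<r}"
    then have "t - c > 0" using assms by auto
    then show "((\<lambda>t. (t - c) powr (p + 1) / (p + 1)) has_vector_derivative \<bar>t - c\<bar> powr p) (at t)"
      using assms by (auto intro!: derivative_eq_intros simp flip: has_real_derivative_iff_has_vector_derivative)
  qed
  then show ?thesis by (simp add: integral_unique diff_divide_distrib)
qed

lemma integral_abs_diff_powr_left:
  fixes l r c p :: real
  assumes "r \<le> c" "l \<le> r" "p > 0"
  shows "integral {l..r} (\<lambda>t. \<bar>t - c\<bar> powr p) = ((c - l) powr (p + 1) - (c - r) powr (p + 1)) / (p + 1)"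
proof -
  have "((\<lambda>t. \<bar>t - c\<bar> powr p) has_integral
      - ((c - r) powr (p + 1) / (p + 1)) - - ((c - l) powr (p + 1) / (p + 1))) {l..r}"
  proof (rule fundamental_theorem_of_calculus_interior[OF \<open>l \<le> r\<close>])
    show "continuous_on {l..r} (\<lambda>t. - ((c - t) powr (p + 1) / (p + 1)))"
      using assms by (intro continuous_intros continuous_on_powr') auto
    fix t assume "t \<in> {l<..<r}"
    then have "c - t > 0" using assms by auto
    then show "((\<lambda>t. - ((c - t) powr (p + 1) / (p + 1))) has_vector_derivative \<bar>t - c\<bar> powr p) (at t)"
      using assms by (auto intro!: derivative_eq_intros simp: abs_minus_commute
          simp flip: has_real_derivative_iff_has_vector_derivative)
  qed
  then show ?thesis by (simp add: integral_unique diff_divide_distrib)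
qed

lemma integral_abs_diff_powr_mid:
  fixes l r c p :: real
  assumes "l \<le> c" "c \<le> r" "p > 0"
  shows "integral {l..r} (\<lambda>t. \<bar>t - c\<bar> powr p) = ((c - l) powr (p + 1) + (r - c) powr (p + 1)) / (p + 1)"
proof -
  have "(\<lambda>t. \<bar>t - c\<bar> powr p) integrable_on {l..r}"
    using assms by (intro integrable_continuous_interval continuous_on_powr' continuous_intros) auto
  then have "integral {l..r} (\<lambda>t. \<bar>t - c\<bar> powr p)
      = integral {l..c} (\<lambda>t. \<bar>t - c\<bar> powr p) + integral {c..r} (\<lambda>t. \<bar>t - c\<bar> powr p)"
    using assms by (simp add: Henstock_Kurzweil_Integration.integral_combine)
  then show ?thesis
    using integral_abs_diff_powr_left[of c c l p] integral_abs_diff_powr_right[of c c r p] assms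
    by (simp add: add_divide_distrib)
qed

lemma le_powr_mult_powr_if_Young_bounded:
  fixes X U V p q :: real
  assumes bound: "\<And>\<mu>. \<mu> > 0 \<Longrightarrow> X \<le> \<mu> powr p * U / p + V / (q * \<mu> powr q)"
    and U: "U \<ge> 0" and V: "V \<ge> 0" and p: "p > 1" and q: "q > 1" and pq: "1 / p + 1 / q = 1"
  shows "X \<le> U powr (1 / p) * V powr (1 / q)"
  \<comment> \<open>The optimal choice is \<open>\<mu> = (V / U) powr (1 / (p * q))\<close>; if \<open>U = 0\<close> or \<open>V = 0\<close>,
    let \<open>\<mu>\<close> tend to \<open>\<infinity>\<close> or to \<open>0\<close> instead.\<close>
proof -
  have bound_ev: "eventually (\<lambda>\<mu>. X \<le> \<mu> powr p * U / p + V / (q * \<mu> powr q)) F"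
    if "eventually (\<lambda>\<mu>. \<mu> > 0) F" for F
    using that by eventually_elim (rule bound)
  consider "U = 0" | "V = 0" | "U > 0" "V > 0" using U V by linarith
  then show ?thesis
  proof cases
    case 1
    have "((\<lambda>\<mu>. V / q * \<mu> powr (- q)) \<longlongrightarrow> 0) at_top"
      using q by (intro tendsto_mult_right_zero tendsto_neg_powr filterlim_ident) auto
    moreover have "eventually (\<lambda>\<mu>. V / q * \<mu> powr (- q) = \<mu> powr p * U / p + V / (q * \<mu> powr q)) at_top"
      using eventually_gt_at_top[of 0] by eventually_elim (use 1 in \<open>simp add: powr_minus divide_inverse\<close>)
    ultimately have "((\<lambda>\<mu>. \<mu> powr p * U / p + V / (q * \<mu> powr q)) \<longlongrightarrow> 0) at_top"
      by (rule Lim_transform_eventually)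
    then have "X \<le> 0"
      using bound_ev[OF eventually_gt_at_top] by (intro tendsto_le[OF _ _ tendsto_const]) auto
    with 1 show ?thesis by simp
  next
    case 2
    have "((\<lambda>\<mu>. \<mu> powr p * U / p) \<longlongrightarrow> 0) (at_right 0)"
      using p by (intro tendsto_divide_zero tendsto_mult_left_zero tendsto_zero_powrI[of _ _ _ p])
        (auto intro: tendsto_ident_at eventually_at_rightI[of 0 1])
    then have "((\<lambda>\<mu>. \<mu> powr p * U / p + V / (q * \<mu> powr q)) \<longlongrightarrow> 0) (at_right 0)"
      using 2 by simp
    then have "X \<le> 0"
      using bound_ev[OF eventually_at_right_less] by (intro tendsto_le[OF _ _ tendsto_const]) auto
    with 2 show ?thesis by simp
  next
    case 3
    define \<mu> where "\<mu> = (V / U) powr (1 / (p * q))"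
    have \<mu>_p: "\<mu> powr p = V powr (1 / q) / U powr (1 / q)"
      and \<mu>_q: "\<mu> powr q = V powr (1 / p) / U powr (1 / p)"
      unfolding \<mu>_def using 3 p q by (simp_all add: powr_powr powr_divide)
    have U_split: "U = U powr (1 / p) * U powr (1 / q)" and V_split: "V = V powr (1 / p) * V powr (1 / q)"
      using 3 pq by (simp_all flip: powr_add)
    have first: "\<mu> powr p * U / p = U powr (1 / p) * V powr (1 / q) / p"
      unfolding \<mu>_p using 3 by (subst (2) U_split) (simp add: field_simps)
    have second: "V / (q * \<mu> powr q) = U powr (1 / p) * V powr (1 / q) / q"
      unfolding \<mu>_q using 3 by (subst (1) V_split) (simp add: field_simps)
    have "\<mu> > 0" using 3 by (simp add: \<mu>_def)
    have "X \<le> U powr (1 / p) * V powr (1 / q) / p + U powr (1 / p) * V powr (1 / q) / q"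
      using bound[OF \<open>\<mu> > 0\<close>] by (simp only: first second)
    also have "\<dots> = U powr (1 / p) * V powr (1 / q) * (1 / p + 1 / q)"
      by (simp add: field_simps)
    finally show ?thesis using pq by simp
  qed
qed

lemma Holder_inequality_interval:
  fixes u v :: "real \<Rightarrow> real"
  assumes "continuous_on {l..r} u" "continuous_on {l..r} v"
    and nonneg: "\<And>t. t \<in> {l..r} \<Longrightarrow> u t \<ge> 0 \<and> v t \<ge> 0"
    and p: "p > 1" and q: "q > 1" and pq: "1 / p + 1 / q = 1"
  shows "integral {l..r} (\<lambda>t. u t * v t)
    \<le> integral {l..r} (\<lambda>t. u t powr p) powr (1 / p) * integral {l..r} (\<lambda>t. v t powr q) powr (1 / q)"
proof (rule le_powr_mult_powr_if_Young_bounded[OF _ _ _ p q pq])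
  have u_p: "(\<lambda>t. u t powr p) integrable_on {l..r}"
    using assms by (intro integrable_continuous_interval continuous_on_powr' continuous_intros) auto
  have v_q: "(\<lambda>t. v t powr q) integrable_on {l..r}"
    using assms by (intro integrable_continuous_interval continuous_on_powr' continuous_intros) auto
  show "integral {l..r} (\<lambda>t. u t powr p) \<ge> 0" "integral {l..r} (\<lambda>t. v t powr q) \<ge> 0"
    by (auto intro: integral_nonneg u_p v_q)
  fix \<mu> :: real assume "\<mu> > 0"
  have "integral {l..r} (\<lambda>t. u t * v t)
      \<le> integral {l..r} (\<lambda>t. \<mu> powr p / p * u t powr p + 1 / (q * \<mu> powr q) * v t powr q)"
  proof (rule integral_le)
    show "(\<lambda>t. u t * v t) integrable_on {l..r}"
      using assms by (intro integrable_continuous_interval continuous_intros)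
    show "(\<lambda>t. \<mu> powr p / p * u t powr p + 1 / (q * \<mu> powr q) * v t powr q) integrable_on {l..r}"
      using u_p v_q by (intro integrable_add integrable_on_mult_right)
    fix t assume t: "t \<in> {l..r}"
    have "u t * v t = (\<mu> * u t) * (v t / \<mu>)" using \<open>\<mu> > 0\<close> by simp
    also have "\<dots> \<le> (\<mu> * u t) powr p / p + (v t / \<mu>) powr q / q"
      using nonneg[OF t] \<open>\<mu> > 0\<close> p q pq by (intro Youngs_inequality) auto
    also have "\<dots> = \<mu> powr p / p * u t powr p + 1 / (q * \<mu> powr q) * v t powr q"
      using nonneg[OF t] \<open>\<mu> > 0\<close> by (simp add: powr_mult powr_divide)
    finally show "u t * v t \<le> \<dots>" .
  qed
  also have "\<dots> = \<mu> powr p * integral {l..r} (\<lambda>t. u t powr p) / p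
      + integral {l..r} (\<lambda>t. v t powr q) / (q * \<mu> powr q)"
    unfolding integral_add[OF integrable_on_mult_right[OF u_p] integrable_on_mult_right[OF v_q]]
    by (simp add: integral_mult_right)
  finally show "integral {l..r} (\<lambda>t. u t * v t) \<le> \<dots>" .
qed

lemma powr_add_le_add_powr:
  fixes u v r :: real
  assumes "0 \<le> u" "0 \<le> v" "0 < r" "r \<le> 1"
  shows "(u + v) powr r \<le> u powr r + v powr r"
proof (cases "u + v = 0")
  case True
  then show ?thesis using assms by simp
next
  case False
  then have S: "u + v > 0" using assms by simp
  have le_powr: "x \<le> x powr r" if "0 \<le> x" "x \<le> 1" for x
    using powr_mono'[of r 1 x] that assms by simp
  have "1 = u / (u + v) + v / (u + v)"
    using S by (simp add: add_divide_distrib[symmetric])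
  also have "\<dots> \<le> (u / (u + v)) powr r + (v / (u + v)) powr r"
    using assms S by (intro add_mono le_powr) auto
  also have "\<dots> = (u powr r + v powr r) / (u + v) powr r"
    using assms S by (simp add: powr_divide add_divide_distrib)
  finally show ?thesis using S by (simp add: field_simps)
qed

lemma powr_convex_combination_le:
  fixes Y Z w s r :: real
  assumes "Y > 0" "Z > 0" "0 \<le> w" "w \<le> 1" "0 < s" "s \<le> r" "r \<le> 1"
  shows "((1 - w) * Y + w * Z) powr r \<le> (1 - w) powr s * Y powr r + w powr s * Z powr r"
proof -
  have "((1 - w) * Y + w * Z) powr r \<le> ((1 - w) * Y) powr r + (w * Z) powr r"
    using assms by (intro powr_add_le_add_powr) auto
  also have "\<dots> = (1 - w) powr r * Y powr r + w powr r * Z powr r"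
    using assms by (simp add: powr_mult)
  also have "\<dots> \<le> (1 - w) powr s * Y powr r + w powr s * Z powr r"
    using assms by (intro add_mono mult_right_mono powr_mono') auto
  finally show ?thesis .
qed

lemma Hermite_Hadamard_s_convex:
  fixes f :: "real \<Rightarrow> real"
  assumes "l \<le> r" "0 < s" "continuous_on {l..r} f"
    and s_convex: "\<And>w. w \<in> {0..1} \<Longrightarrow> f ((1 - w) * l + w * r) \<le> (1 - w) powr s * f l + w powr s * f r"
  shows "integral {l..r} f \<le> (r - l) * (f l + f r) / (s + 1)"
proof (cases "l = r")
  case True
  then show ?thesis by simp
next
  case False
  with \<open>l \<le> r\<close> have "l < r" by simp
  define K where "K = (r - l) powr s"
  have "K > 0" using \<open>l < r\<close> by (simp add: K_def)
  have to_r: "(\<lambda>t. \<bar>t - r\<bar> powr s) integrable_on {l..r}"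
    using \<open>0 < s\<close> by (intro integrable_continuous_interval continuous_on_powr' continuous_intros) auto
  have to_l: "(\<lambda>t. \<bar>t - l\<bar> powr s) integrable_on {l..r}"
    using \<open>0 < s\<close> by (intro integrable_continuous_interval continuous_on_powr' continuous_intros) auto
  have "integral {l..r} f \<le> integral {l..r} (\<lambda>t. f l / K * \<bar>t - r\<bar> powr s + f r / K * \<bar>t - l\<bar> powr s)"
  proof (rule integral_le)
    show "f integrable_on {l..r}" using assms by (intro integrable_continuous_interval)
    show "(\<lambda>t. f l / K * \<bar>t - r\<bar> powr s + f r / K * \<bar>t - l\<bar> powr s) integrable_on {l..r}"
      using to_r to_l by (intro integrable_add integrable_on_mult_right)
    fix t assume t: "t \<in> {l..r}"
    define w where "w = (t - l) / (r - l)"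
    have "(1 - w) * l + w * r = l + w * (r - l)"
      by (simp add: algebra_simps)
    also have "\<dots> = t"
      using \<open>l < r\<close> by (simp add: w_def)
    finally have "(1 - w) * l + w * r = t" .
    moreover have "w \<in> {0..1}"
      using t \<open>l < r\<close> by (auto simp: w_def field_simps)
    moreover have "1 - w = \<bar>t - r\<bar> / (r - l)" "w = \<bar>t - l\<bar> / (r - l)"
      using t \<open>l < r\<close> by (auto simp: w_def field_simps)
    ultimately show "f t \<le> f l / K * \<bar>t - r\<bar> powr s + f r / K * \<bar>t - l\<bar> powr s"
      using s_convex[of w] by (simp add: K_def powr_divide mult.commute)
  qed
  also have "\<dots> = f l / K * ((r - l) powr (s + 1) / (s + 1)) + f r / K * ((r - l) powr (s + 1) / (s + 1))"
    unfolding integral_add[OF integrable_on_mult_right[OF to_r] integrable_on_mult_right[OF to_l]]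
    using integral_abs_diff_powr_left[of r r l s] integral_abs_diff_powr_right[of l l r s] assms
    by (simp add: integral_mult_right mult.commute)
  also have "(r - l) powr (s + 1) = K * (r - l)"
    using \<open>l < r\<close> by (simp add: K_def powr_add)
  also have "f l / K * (K * (r - l) / (s + 1)) + f r / K * (K * (r - l) / (s + 1))
      = (r - l) * (f l + f r) / (s + 1)"
    using \<open>K > 0\<close> \<open>0 < s\<close> by (simp add: divide_simps) (simp add: algebra_simps)
  finally show ?thesis .
qed

lemma has_integral_kernel_mult_deriv:
  fixes F F' \<Phi> :: "real \<Rightarrow> real"
  assumes "a < b" "0 \<le> l" "l \<le> r" "r \<le> 1"
    and F: "\<And>x. x \<in> {a..b} \<Longrightarrow> (F has_real_derivative F' x) (at x)"
    and \<Phi>: "\<And>x. x \<in> {a..b} \<Longrightarrow> (\<Phi> has_real_derivative F x) (at x)"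
  shows "((\<lambda>t. (t - c) * F' (a + t * (b - a))) has_integral
      ((r - c) * F (a + r * (b - a)) - (l - c) * F (a + l * (b - a))
       - (\<Phi> (a + r * (b - a)) - \<Phi> (a + l * (b - a))) / (b - a)) / (b - a)) {l..r}"
proof -
  define G where "G t = ((t - c) * F (a + t * (b - a)) - \<Phi> (a + t * (b - a)) / (b - a)) / (b - a)" for t
  have "(G has_real_derivative (t - c) * F' (a + t * (b - a))) (at t)" if "t \<in> {l..r}" for t
  proof -
    have "0 \<le> t * (b - a)" "t * (b - a) \<le> b - a"
      using that assms by (auto intro: mult_left_le_one_le)
    then have x: "a + t * (b - a) \<in> {a..b}"
      unfolding atLeastAtMost_iff by linarith
    have x': "((\<lambda>t. a + t * (b - a)) has_real_derivative b - a) (at t)"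
      by (auto intro!: derivative_eq_intros)
    note chain_F = DERIV_chain2[where f = F, OF F[OF x] x']
    note chain_\<Phi> = DERIV_chain2[where f = \<Phi>, OF \<Phi>[OF x] x']
    have "(G has_real_derivative
        ((1 - 0) * F (a + t * (b - a)) + F' (a + t * (b - a)) * (b - a) * (t - c)
         - F (a + t * (b - a)) * (b - a) / (b - a)) / (b - a)) (at t)"
      unfolding G_def
      by (intro DERIV_cdivide DERIV_diff DERIV_mult chain_F chain_\<Phi> DERIV_ident DERIV_const)
    then show ?thesis
      by (rule DERIV_cong) (use \<open>a < b\<close> in simp)
  qed
  then have "((\<lambda>t. (t - c) * F' (a + t * (b - a))) has_integral G r - G l) {l..r}"
    using \<open>l \<le> r\<close>
    by (intro fundamental_theorem_of_calculus)
      (auto simp: has_real_derivative_iff_has_vector_derivative[symmetric] intro: has_field_derivative_at_within)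
  then show ?thesis
    by (rule has_integral_eq_rhs) (simp add: G_def diff_divide_distrib)
qed

lemma weighted_mean_kernel_identity:
  fixes F F' \<Phi> :: "real \<Rightarrow> real"
  assumes "a < b" "0 \<le> \<alpha>" "\<alpha> \<le> 1"
    and F: "\<And>x. x \<in> {a..b} \<Longrightarrow> (F has_real_derivative F' x) (at x)"
    and \<Phi>: "\<And>x. x \<in> {a..b} \<Longrightarrow> (\<Phi> has_real_derivative F x) (at x)"
  shows "lam * wam \<alpha> (F a) (F b) + (1 - lam) * F (wam \<alpha> a b) - (\<Phi> b - \<Phi> a) / (b - a)
    = (b - a) * (integral {0..1 - \<alpha>} (\<lambda>t. (t - \<alpha> * lam) * F' (a + t * (b - a)))
               + integral {1 - \<alpha>..1} (\<lambda>t. (t - (1 - lam * (1 - \<alpha>))) * F' (a + t * (b - a))))"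
proof -
  have mid: "a + (1 - \<alpha>) * (b - a) = wam \<alpha> a b"
    by (simp add: wam_def algebra_simps)
  note kernel = has_integral_kernel_mult_deriv[OF \<open>a < b\<close> _ _ _ F \<Phi>, THEN integral_unique]
  have ends: "a + 0 * (b - a) = a" "a + 1 * (b - a) = b"
    by simp_all
  have "integral {0..1 - \<alpha>} (\<lambda>t. (t - \<alpha> * lam) * F' (a + t * (b - a)))
      = ((1 - \<alpha> - \<alpha> * lam) * F (wam \<alpha> a b) - (0 - \<alpha> * lam) * F a
         - (\<Phi> (wam \<alpha> a b) - \<Phi> a) / (b - a)) / (b - a)"
    using kernel[of 0 "1 - \<alpha>" "\<alpha> * lam"] assms unfolding mid ends by simp
  moreover have "integral {1 - \<alpha>..1} (\<lambda>t. (t - (1 - lam * (1 - \<alpha>))) * F' (a + t * (b - a)))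
      = ((1 - (1 - lam * (1 - \<alpha>))) * F b - (1 - \<alpha> - (1 - lam * (1 - \<alpha>))) * F (wam \<alpha> a b)
         - (\<Phi> b - \<Phi> (wam \<alpha> a b)) / (b - a)) / (b - a)"
    using kernel[of "1 - \<alpha>" 1 "1 - lam * (1 - \<alpha>)"] assms unfolding mid ends by simp
  ultimately show ?thesis
    using \<open>a < b\<close>
    by (simp add: add_divide_distrib[symmetric]) (simp add: wam_def algebra_simps diff_divide_distrib)
qed

lemma plog_mean_powr:
  assumes "0 < x" "x < y" "0 < p"
  shows "plog_mean p x y powr p = (y powr (p + 1) - x powr (p + 1)) / ((p + 1) * (y - x))"
proof -
  have mono: "x powr (p + 1) < y powr (p + 1)"
    using assms by (intro powr_less_mono2) auto
  then have "(y powr (p + 1) - x powr (p + 1)) / ((p + 1) * (y - x)) > 0"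
    using assms by (intro divide_pos_pos) auto
  then show ?thesis
    using assms mono by (simp add: plog_mean_def powr_powr)
qed

lemma integral_powr_deriv_powr_le:
  fixes a b l r s q :: real
  assumes "0 < a" "a < b" "0 \<le> l" "l \<le> r" "0 < s" "1 \<le> q" "s * q \<le> 1"
  shows "integral {l..r} (\<lambda>t. ((s + 1) * (a + t * (b - a)) powr s) powr q)
    \<le> (s + 1) powr (q - 1) * ((r - l) * ((a + l * (b - a)) powr (s * q) + (a + r * (b - a)) powr (s * q)))"
proof -
  define f where "f t = (a + t * (b - a)) powr (s * q)" for t
  have pos: "a + t * (b - a) > 0" if "t \<ge> 0" for t
    using assms that by (intro add_pos_nonneg) auto
  have mean_le: "integral {l..r} f \<le> (r - l) * (f l + f r) / (s + 1)"
  proof (rule Hermite_Hadamard_s_convex)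
    show "continuous_on {l..r} f"
      unfolding f_def using pos assms by (intro continuous_on_powr' continuous_intros) (auto intro: less_imp_le)
    fix w :: real assume w: "w \<in> {0..1}"
    have "f ((1 - w) * l + w * r) = ((1 - w) * (a + l * (b - a)) + w * (a + r * (b - a))) powr (s * q)"
      unfolding f_def by (simp add: algebra_simps)
    also have "\<dots> \<le> (1 - w) powr s * f l + w powr s * f r"
      unfolding f_def using w assms pos by (intro powr_convex_combination_le) auto
    finally show "f ((1 - w) * l + w * r) \<le> (1 - w) powr s * f l + w powr s * f r" .
  qed (use assms in auto)
  have "integral {l..r} (\<lambda>t. ((s + 1) * (a + t * (b - a)) powr s) powr q)
      = (s + 1) powr q * integral {l..r} f"
    unfolding f_def using pos assms by (simp add: powr_mult powr_powr less_imp_le)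
  also have "\<dots> \<le> (s + 1) powr q * ((r - l) * (f l + f r) / (s + 1))"
    using mean_le by (intro mult_left_mono) auto
  also have "\<dots> = (s + 1) powr (q - 1) * ((r - l) * (f l + f r))"
    using assms by (simp add: powr_diff)
  finally show ?thesis
    unfolding f_def .
qed

lemma kernel_integral_powr_deriv_le:
  fixes a b p q s l r c :: real
  assumes "0 < a" "a < b" "p > 1" "q > 1" "1 / p + 1 / q = 1" "0 < s" "s * q \<le> 1" "0 \<le> l" "l \<le> r"
  shows "\<bar>integral {l..r} (\<lambda>t. (t - c) * ((s + 1) * (a + t * (b - a)) powr s))\<bar>
    \<le> integral {l..r} (\<lambda>t. \<bar>t - c\<bar> powr p) powr (1 / p)
      * ((s + 1) powr (1 - 1 / q)
         * ((r - l) * ((a + l * (b - a)) powr (s * q) + (a + r * (b - a)) powr (s * q))) powr (1 / q))"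
proof -
  define h where "h t = (s + 1) * (a + t * (b - a)) powr s" for t
  define W where "W = (r - l) * ((a + l * (b - a)) powr (s * q) + (a + r * (b - a)) powr (s * q))"
  have h: "continuous_on {l..r} h"
    unfolding h_def using assms
    by (intro continuous_intros continuous_on_powr')
      (auto intro!: add_pos_nonneg less_imp_le)
  have h_q: "(\<lambda>t. h t powr q) integrable_on {l..r}"
    using h assms by (intro integrable_continuous_interval continuous_on_powr' continuous_intros) (auto simp: h_def)
  have "norm (integral {l..r} (\<lambda>t. (t - c) * h t)) \<le> integral {l..r} (\<lambda>t. \<bar>t - c\<bar> * h t)"
    using h assms by (intro integral_norm_bound_integral integrable_continuous_interval continuous_intros)
      (auto simp: h_def abs_mult)
  then have "\<bar>integral {l..r} (\<lambda>t. (t - c) * h t)\<bar> \<le> integral {l..r} (\<lambda>t. \<bar>t - c\<bar> * h t)"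
    by simp
  also have "\<dots> \<le> integral {l..r} (\<lambda>t. \<bar>t - c\<bar> powr p) powr (1 / p) * integral {l..r} (\<lambda>t. h t powr q) powr (1 / q)"
    using h assms
    by (intro Holder_inequality_interval continuous_intros) (auto simp: h_def)
  also have "integral {l..r} (\<lambda>t. h t powr q) powr (1 / q) \<le> ((s + 1) powr (q - 1) * W) powr (1 / q)"
    using integral_powr_deriv_powr_le[of a b l r s q] h_q assms
    by (intro powr_mono2 integral_nonneg) (auto simp: h_def W_def)
  also have "\<dots> = (s + 1) powr (1 - 1 / q) * W powr (1 / q)"
    using assms by (simp add: W_def powr_mult powr_powr diff_divide_distrib)
  finally show ?thesis
    unfolding h_def W_def by (simp add: mult_left_mono)
qed

lemma first_kernel_moment_eps1:
  assumes "0 \<le> \<alpha> * lam" "\<alpha> * lam \<le> 1 - \<alpha>" "p > 0"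
  shows "integral {0..1 - \<alpha>} (\<lambda>t. \<bar>t - \<alpha> * lam\<bar> powr p) = eps1 \<alpha> lam p / (p + 1)"
  using integral_abs_diff_powr_mid[OF assms] by (simp add: eps1_def)

lemma first_kernel_moment_eps2:
  assumes "1 - \<alpha> \<le> \<alpha> * lam" "\<alpha> \<le> 1" "p > 0"
  shows "integral {0..1 - \<alpha>} (\<lambda>t. \<bar>t - \<alpha> * lam\<bar> powr p) = eps2 \<alpha> lam p / (p + 1)"
  using integral_abs_diff_powr_left[of "1 - \<alpha>" "\<alpha> * lam" 0 p] assms
  by (simp add: eps2_def algebra_simps)

lemma second_kernel_moment_eps1:
  assumes "1 - \<alpha> \<le> 1 - lam * (1 - \<alpha>)" "0 \<le> lam * (1 - \<alpha>)" "p > 0"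
  shows "integral {1 - \<alpha>..1} (\<lambda>t. \<bar>t - (1 - lam * (1 - \<alpha>))\<bar> powr p) = eps1 (1 - \<alpha>) lam p / (p + 1)"
  using integral_abs_diff_powr_mid[of "1 - \<alpha>" "1 - lam * (1 - \<alpha>)" 1 p] assms
  by (simp add: eps1_def algebra_simps)

lemma second_kernel_moment_eps2:
  assumes "1 - lam * (1 - \<alpha>) \<le> 1 - \<alpha>" "0 \<le> \<alpha>" "p > 0"
  shows "integral {1 - \<alpha>..1} (\<lambda>t. \<bar>t - (1 - lam * (1 - \<alpha>))\<bar> powr p) = eps2 (1 - \<alpha>) lam p / (p + 1)"
  using integral_abs_diff_powr_right[of "1 - lam * (1 - \<alpha>)" "1 - \<alpha>" 1 p] assms
  by (simp add: eps2_def algebra_simps)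

lemma weighted_mean_powr_kernel_bound:
  fixes a b p q s \<alpha> lam \<epsilon>\<^sub>1 \<epsilon>\<^sub>2 :: real
  assumes "0 < a" "a < b" "p > 1" "q > 1" "1 / p + 1 / q = 1" "0 < s" "s * q \<le> 1" "0 \<le> \<alpha>" "\<alpha> \<le> 1"
    and first: "integral {0..1 - \<alpha>} (\<lambda>t. \<bar>t - \<alpha> * lam\<bar> powr p) = \<epsilon>\<^sub>1 / (p + 1)"
    and second: "integral {1 - \<alpha>..1} (\<lambda>t. \<bar>t - (1 - lam * (1 - \<alpha>))\<bar> powr p) = \<epsilon>\<^sub>2 / (p + 1)"
  shows "\<bar>lam * wam \<alpha> (a powr (s + 1)) (b powr (s + 1)) + (1 - lam) * wam \<alpha> a b powr (s + 1)
           - plog_mean (s + 1) a b powr (s + 1)\<bar>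
    \<le> (b - a) * (1 / (p + 1)) powr (1 / p) * (s + 1) powr (1 - 1 / q)
       * (\<epsilon>\<^sub>1 powr (1 / p) * Cs a b s \<alpha> q powr (1 / q) + \<epsilon>\<^sub>2 powr (1 / p) * Ds a b s \<alpha> q powr (1 / q))"
proof -
  define P\<^sub>1 where "P\<^sub>1 = integral {0..1 - \<alpha>} (\<lambda>t. (t - \<alpha> * lam) * ((s + 1) * (a + t * (b - a)) powr s))"
  define P\<^sub>2 where "P\<^sub>2 = integral {1 - \<alpha>..1} (\<lambda>t. (t - (1 - lam * (1 - \<alpha>))) * ((s + 1) * (a + t * (b - a)) powr s))"
  define R where "R = (1 / (p + 1)) powr (1 / p)"
  define S where "S = (s + 1) powr (1 - 1 / q)"
  have F: "((\<lambda>x. x powr (s + 1)) has_real_derivative (s + 1) * x powr s) (at x)"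
    and \<Phi>: "((\<lambda>x. x powr (s + 2) / (s + 2)) has_real_derivative x powr (s + 1)) (at x)"
    if "x \<in> {a..b}" for x
    using that assms by (auto intro!: derivative_eq_intros simp: add.commute)
  have identity: "lam * wam \<alpha> (a powr (s + 1)) (b powr (s + 1)) + (1 - lam) * wam \<alpha> a b powr (s + 1)
      - plog_mean (s + 1) a b powr (s + 1) = (b - a) * (P\<^sub>1 + P\<^sub>2)"
    using weighted_mean_kernel_identity[OF \<open>a < b\<close> \<open>0 \<le> \<alpha>\<close> \<open>\<alpha> \<le> 1\<close> F \<Phi>, of lam]
      plog_mean_powr[of a b "s + 1"] assms
    by (simp add: P\<^sub>1_def P\<^sub>2_def diff_divide_distrib add_ac)
  have moment: "integral {l..r} (\<lambda>t. \<bar>t - c\<bar> powr p) powr (1 / p) = R * \<epsilon> powr (1 / p)"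
    if "integral {l..r} (\<lambda>t. \<bar>t - c\<bar> powr p) = \<epsilon> / (p + 1)" "l \<le> r" for l r c \<epsilon>
  proof -
    have "\<epsilon> = (p + 1) * integral {l..r} (\<lambda>t. \<bar>t - c\<bar> powr p)"
      using that assms by simp
    also have "\<dots> \<ge> 0"
      using assms by (intro mult_nonneg_nonneg integral_nonneg integrable_continuous_interval
          continuous_on_powr' continuous_intros) auto
    finally show ?thesis
      using that assms by (simp add: R_def powr_mult[symmetric] divide_inverse mult.commute)
  qed
  have B\<^sub>1: "\<bar>P\<^sub>1\<bar> \<le> R * \<epsilon>\<^sub>1 powr (1 / p) * (S * Cs a b s \<alpha> q powr (1 / q))"
    using kernel_integral_powr_deriv_le[of a b p q s 0 "1 - \<alpha>" "\<alpha> * lam"] moment[OF first] assms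
    by (simp add: P\<^sub>1_def S_def Cs_def wam_def algebra_simps)
  have B\<^sub>2: "\<bar>P\<^sub>2\<bar> \<le> R * \<epsilon>\<^sub>2 powr (1 / p) * (S * Ds a b s \<alpha> q powr (1 / q))"
    using kernel_integral_powr_deriv_le[of a b p q s "1 - \<alpha>" 1 "1 - lam * (1 - \<alpha>)"] moment[OF second] assms
    by (simp add: P\<^sub>2_def S_def Ds_def wam_def algebra_simps)
  have "\<bar>P\<^sub>1 + P\<^sub>2\<bar> \<le> R * \<epsilon>\<^sub>1 powr (1 / p) * (S * Cs a b s \<alpha> q powr (1 / q))
      + R * \<epsilon>\<^sub>2 powr (1 / p) * (S * Ds a b s \<alpha> q powr (1 / q))"
    using B\<^sub>1 B\<^sub>2 by (rule order_trans[OF abs_triangle_ineq add_mono])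
  then have "\<bar>(b - a) * (P\<^sub>1 + P\<^sub>2)\<bar> \<le> (b - a) * (R * \<epsilon>\<^sub>1 powr (1 / p) * (S * Cs a b s \<alpha> q powr (1 / q))
      + R * \<epsilon>\<^sub>2 powr (1 / p) * (S * Ds a b s \<alpha> q powr (1 / q)))"
    using assms by (simp add: abs_mult mult_left_mono)
  also have "\<dots> = (b - a) * R * S
      * (\<epsilon>\<^sub>1 powr (1 / p) * Cs a b s \<alpha> q powr (1 / q) + \<epsilon>\<^sub>2 powr (1 / p) * Ds a b s \<alpha> q powr (1 / q))"
    by (simp add: algebra_simps)
  finally show ?thesis
    unfolding identity R_def S_def .
qed

theorem mainTheorem8:
  fixes a b p q s \<alpha> lam :: real
  assumes "0 < a" "a < b" "p > 1" "q > 1" "1 / p + 1 / q = 1"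
    and "0 < s" "s < 1 / q"
    and "0 \<le> \<alpha>" "\<alpha> \<le> 1" "0 \<le> lam" "lam \<le> 1"
  defines "E \<equiv> \<bar>lam * wam \<alpha> (a powr (s + 1)) (b powr (s + 1))
                 + (1 - lam) * wam \<alpha> a b powr (s + 1)
                 - plog_mean (s + 1) a b powr (s + 1)\<bar>"
    and "M \<equiv> (b - a) * (1 / (p + 1)) powr (1 / p) * (s + 1) powr (1 - 1 / q)"
  shows "(\<alpha> * lam \<le> 1 - \<alpha> \<and> 1 - \<alpha> \<le> 1 - lam * (1 - \<alpha>) \<longrightarrow>
           E \<le> M * (eps1 \<alpha> lam p powr (1 / p) * Cs a b s \<alpha> q powr (1 / q)
                   + eps1 (1 - \<alpha>) lam p powr (1 / p) * Ds a b s \<alpha> q powr (1 / q)))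
       \<and> (\<alpha> * lam \<le> 1 - lam * (1 - \<alpha>) \<and> 1 - lam * (1 - \<alpha>) \<le> 1 - \<alpha> \<longrightarrow>
           E \<le> M * (eps1 \<alpha> lam p powr (1 / p) * Cs a b s \<alpha> q powr (1 / q)
                   + eps2 (1 - \<alpha>) lam p powr (1 / p) * Ds a b s \<alpha> q powr (1 / q)))
       \<and> (1 - \<alpha> \<le> \<alpha> * lam \<and> \<alpha> * lam \<le> 1 - lam * (1 - \<alpha>) \<longrightarrow>
           E \<le> M * (eps2 \<alpha> lam p powr (1 / p) * Cs a b s \<alpha> q powr (1 / q)
                   + eps1 (1 - \<alpha>) lam p powr (1 / p) * Ds a b s \<alpha> q powr (1 / q)))"
proof -
  have "s * q \<le> 1" "p > 0"
    using assms by (simp_all add: field_simps)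
  have bound: "E \<le> M * (\<epsilon>\<^sub>1 powr (1 / p) * Cs a b s \<alpha> q powr (1 / q) + \<epsilon>\<^sub>2 powr (1 / p) * Ds a b s \<alpha> q powr (1 / q))"
    if "integral {0..1 - \<alpha>} (\<lambda>t. \<bar>t - \<alpha> * lam\<bar> powr p) = \<epsilon>\<^sub>1 / (p + 1)"
      "integral {1 - \<alpha>..1} (\<lambda>t. \<bar>t - (1 - lam * (1 - \<alpha>))\<bar> powr p) = \<epsilon>\<^sub>2 / (p + 1)" for \<epsilon>\<^sub>1 \<epsilon>\<^sub>2
    unfolding E_def M_def using weighted_mean_powr_kernel_bound[OF assms(1-6) \<open>s * q \<le> 1\<close> assms(8,9) that] by simp
  have "0 \<le> \<alpha> * lam" "0 \<le> lam * (1 - \<alpha>)"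
    using assms by simp_all
  then show ?thesis
    using \<open>p > 0\<close> assms(8,9)
      bound[OF first_kernel_moment_eps1 second_kernel_moment_eps1]
      bound[OF first_kernel_moment_eps1 second_kernel_moment_eps2]
      bound[OF first_kernel_moment_eps2 second_kernel_moment_eps1]
    by (meson order.trans)
qed

end
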